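(* For all positive integers $m,n$, the posets $\mathcal P(m,n)$ and $\mathcal P(n,m)$ are isomorphic.
   Context: $\mathcal P(m,n)$ is the poset whose elements are the monomials of degree $m$ in $K[x_0,\dots,x_n]$, with partial order $\ge_B$ generated (as the reflexive-transitive closure) by the covering relation: $\mathbf x^A\succ_B\mathbf x^B$ iff there is $i<n$ with $\mathbf x^A=\frac{x_i}{x_{i+1}}\mathbf x^B$. *)

theory Defs
  imports Main
begin

(* Monomials of degree m in K[x_0,...,x_n], represented by exponent vectors
  a :: nat => nat with a i = 0 for i > n and a_0 + ... + a_n = m. *)
definition monoms :: "nat \<Rightarrow> nat \<Rightarrow> (nat \<Rightarrow> nat) set" where
  "monoms m n = {a. (\<forall>i>n. a i = 0) \<and> (\<Sum>i\<le>n. a i) = m}"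

(* Covering relation: x^A covers x^B iff x^A = (x_i / x_(i+1)) x^B for some i < n. *)
definition coverB :: "nat \<Rightarrow> (nat \<Rightarrow> nat) \<Rightarrow> (nat \<Rightarrow> nat) \<Rightarrow> bool" where
  "coverB n A B \<longleftrightarrow> (\<exists>i<n. 1 \<le> B (Suc i) \<and>
      A = B(i := B i + 1, Suc i := B (Suc i) - 1))"

definition geB :: "nat \<Rightarrow> nat \<Rightarrow> (nat \<Rightarrow> nat) \<Rightarrow> (nat \<Rightarrow> nat) \<Rightarrow> bool" where
  "geB m n = (\<lambda>A B. A \<in> monoms m n \<and> B \<in> monoms m n \<and> coverB n A B)\<^sup>*\<^sup>*"

end

theory Submission
  imports Defs
begin

(* A monomial x^a of degree m in x_0, ..., x_n is determined by its partial sums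
  s_j = a_0 + ... + a_j, a weakly increasing sequence s_0 <= ... <= s_n = m; equivalently,
  s_0, ..., s_(n-1) are the column heights of a Young diagram inside an n x m box.
  A cover x^A = (x_i / x_(i+1)) x^B raises exactly s_i by one, so >=_B becomes the
  componentwise order on partial sums (the converse uses that B can always be raised
  one step towards a componentwise larger A).  Transposing the diagram is an
  order-preserving involution between diagrams in the n x m and in the m x n box. *)

definition psums :: "nat \<Rightarrow> (nat \<Rightarrow> nat) \<Rightarrow> nat \<Rightarrow> nat" where
  "psums n a j = (if j \<le> n then \<Sum>i\<le>j. a i else 0)"

definition mono_seqs :: "nat \<Rightarrow> nat \<Rightarrow> (nat \<Rightarrow> nat) set" where
  "mono_seqs m n = {s. mono_on {..n} s \<and> s n = m \<and> (\<forall>j>n. s j = 0)}"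

definition diffs :: "nat \<Rightarrow> (nat \<Rightarrow> nat) \<Rightarrow> nat \<Rightarrow> nat" where
  "diffs n s i = (if n < i then 0 else if i = 0 then s 0 else s i - s (i - 1))"

lemma psums_0 [simp]: "psums n a 0 = a 0"
  by (simp add: psums_def)

lemma psums_Suc [simp]: "Suc j \<le> n \<Longrightarrow> psums n a (Suc j) = psums n a j + a (Suc j)"
  by (simp add: psums_def)

lemma psums_mono: "i \<le> j \<Longrightarrow> j \<le> n \<Longrightarrow> psums n a i \<le> psums n a j"
  unfolding psums_def by (auto intro: sum_mono2)

lemma monoms_iff_psums: "a \<in> monoms m n \<longleftrightarrow> (\<forall>i>n. a i = 0) \<and> psums n a n = m"
  by (simp add: monoms_def psums_def)

lemma psums_in_mono_seqs: "a \<in> monoms m n \<Longrightarrow> psums n a \<in> mono_seqs m n"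
  by (auto simp: mono_seqs_def monoms_iff_psums intro!: mono_onI psums_mono)
     (simp add: psums_def)

lemma psums_diffs:
  assumes "s \<in> mono_seqs m n"
  shows "psums n (diffs n s) = s"
proof
  fix j
  have "psums n (diffs n s) j = s j" if "j \<le> n"
    using that
  proof (induction j)
    case (Suc j)
    have "s j \<le> s (Suc j)"
      using assms Suc.prems by (auto simp: mono_seqs_def intro: mono_onD)
    with Suc show ?case by (simp add: diffs_def)
  qed (simp add: diffs_def)
  then show "psums n (diffs n s) j = s j"
    using assms by (cases "j \<le> n") (auto simp: psums_def mono_seqs_def)
qed

lemma diffs_in_monoms: "s \<in> mono_seqs m n \<Longrightarrow> diffs n s \<in> monoms m n"
  using psums_diffs by (auto simp: monoms_iff_psums mono_seqs_def diffs_def)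

lemma diffs_psums:
  assumes "a \<in> monoms m n"
  shows "diffs n (psums n a) = a"
proof
  fix i
  show "diffs n (psums n a) i = a i"
    using assms by (cases i) (auto simp: diffs_def psums_def monoms_def)
qed

lemma bij_betw_psums: "bij_betw (psums n) (monoms m n) (mono_seqs m n)"
  by (rule bij_betw_byWitness[where f' = "diffs n"])
     (auto simp: diffs_psums psums_diffs psums_in_mono_seqs diffs_in_monoms)

lemma bij_betw_diffs: "bij_betw (diffs n) (mono_seqs m n) (monoms m n)"
  by (rule bij_betw_byWitness[where f' = "psums n"])
     (auto simp: diffs_psums psums_diffs psums_in_mono_seqs diffs_in_monoms)

definition move_unit :: "nat \<Rightarrow> (nat \<Rightarrow> nat) \<Rightarrow> nat \<Rightarrow> nat" where
  "move_unit i a = a(i := a i + 1, Suc i := a (Suc i) - 1)"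

lemma coverB_iff_move_unit: "coverB n A B \<longleftrightarrow> (\<exists>i<n. 0 < B (Suc i) \<and> A = move_unit i B)"
  by (auto simp: coverB_def move_unit_def)

lemma psums_move_unit:
  assumes "i < n" and "0 < a (Suc i)"
  shows "psums n (move_unit i a) = (psums n a)(i := psums n a i + 1)"
proof -
  have "(\<Sum>k\<le>j. move_unit i a k) = (\<Sum>k\<le>j. a k) + (if j = i then 1 else 0)" for j
    using assms(2) by (induction j) (auto simp: move_unit_def)
  then show ?thesis
    using assms(1) by (auto simp: psums_def fun_eq_iff)
qed

lemma move_unit_in_monoms:
  assumes "a \<in> monoms m n" "i < n" "0 < a (Suc i)"
  shows "move_unit i a \<in> monoms m n"
proof -
  have "psums n (move_unit i a) n = psums n a n"
    using assms(2,3) by (simp add: psums_move_unit)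
  then show ?thesis
    using assms(1,2) by (auto simp: monoms_iff_psums move_unit_def)
qed

lemma coverB_psums_le: "coverB n A B \<Longrightarrow> psums n B \<le> psums n A"
  by (auto simp: coverB_iff_move_unit psums_move_unit le_fun_def)

lemma geB_psums_le: "geB m n A B \<Longrightarrow> psums n B \<le> psums n A"
  unfolding geB_def
  by (induction rule: rtranclp_induct) (auto dest: coverB_psums_le intro: order_trans)

(* For the largest J at which the partial sums of B lag behind those of A, they catch up
  at J + 1; hence B (Suc J) > 0. *)
lemma psums_less_obtains_movable_unit:
  assumes A: "A \<in> monoms m n" and B: "B \<in> monoms m n"
    and le: "psums n B \<le> psums n A" and ne: "psums n B \<noteq> psums n A"
  obtains J where "J < n" "psums n B J < psums n A J" "0 < B (Suc J)"
proof -
  define S where "S = {j. j \<le> n \<and> psums n B j < psums n A j}"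
  have "finite S" by (simp add: S_def)
  from ne obtain j where "psums n B j \<noteq> psums n A j" by (auto simp: fun_eq_iff)
  moreover have "j \<le> n"
    using \<open>psums n B j \<noteq> psums n A j\<close> by (rule contrapos_np) (simp add: psums_def)
  ultimately have "j \<in> S" using le_funD[OF le, of j] by (simp add: S_def)
  define J where "J = Max S"
  have "J \<in> S" unfolding J_def using \<open>finite S\<close> \<open>j \<in> S\<close> Max_in by blast
  have "J \<noteq> n" using \<open>J \<in> S\<close> A B by (auto simp: S_def monoms_iff_psums)
  with \<open>J \<in> S\<close> have "J < n" by (simp add: S_def)
  have "Suc J \<notin> S" using Max_ge[OF \<open>finite S\<close>, of "Suc J"] by (auto simp: J_def)
  then have "psums n B J < psums n B (Suc J)"
    using \<open>J \<in> S\<close> \<open>J < n\<close> psums_mono[of J "Suc J" n A] by (auto simp: S_def)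
  with \<open>J < n\<close> \<open>J \<in> S\<close> show ?thesis by (intro that) (auto simp: S_def)
qed

lemma psums_le_imp_geB:
  assumes A: "A \<in> monoms m n"
  shows "B \<in> monoms m n \<Longrightarrow> psums n B \<le> psums n A \<Longrightarrow> geB m n A B"
proof (induction "\<Sum>j\<le>n. psums n A j - psums n B j" arbitrary: B rule: less_induct)
  case less
  show ?case
  proof (cases "psums n B = psums n A")
    case True
    then have "B = A" using diffs_psums A less.prems(1) by metis
    then show ?thesis by (simp add: geB_def)
  next
    case False
    then obtain J where J: "J < n" "psums n B J < psums n A J" "0 < B (Suc J)"
      using psums_less_obtains_movable_unit A less.prems by blast
    define B' where "B' = move_unit J B"
    have psums_B': "psums n B' = (psums n B)(J := psums n B J + 1)"
      unfolding B'_def using J(1,3) by (rule psums_move_unit)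
    have "B' \<in> monoms m n"
      unfolding B'_def using less.prems(1) J(1,3) by (rule move_unit_in_monoms)
    moreover have "psums n B' \<le> psums n A"
      using less.prems(2) J(2) by (auto simp: psums_B' le_fun_def Suc_le_eq)
    moreover have "(\<Sum>j\<le>n. psums n A j - psums n B' j) < (\<Sum>j\<le>n. psums n A j - psums n B j)"
      by (rule sum_strict_mono_ex1) (use J in \<open>auto simp: psums_B'\<close>)
    ultimately have "geB m n A B'" using less.hyps by blast
    moreover have "coverB n B' B" unfolding coverB_iff_move_unit B'_def using J by auto
    ultimately show ?thesis
      using \<open>B' \<in> monoms m n\<close> less.prems(1) unfolding geB_def
      by (simp add: rtranclp.rtrancl_into_rtrancl)
  qed
qed

lemma geB_iff_psums_le:
  "A \<in> monoms m n \<Longrightarrow> B \<in> monoms m n \<Longrightarrow> geB m n A B \<longleftrightarrow> psums n B \<le> psums n A"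
  using geB_psums_le psums_le_imp_geB by blast

(* Viewing s_0, ..., s_(n-1) as the column heights of a diagram in an n x m box,
  conjugate m n s k for k < m is the length of the row at height m - k, i.e. the rows of the
  transposed diagram listed from the top; the value at k = m is n. *)
definition conjugate :: "nat \<Rightarrow> nat \<Rightarrow> (nat \<Rightarrow> nat) \<Rightarrow> nat \<Rightarrow> nat" where
  "conjugate m n s k = (if k \<le> m then card {j. j < n \<and> m - k \<le> s j} else 0)"

lemma card_upward_closed_iff:
  assumes up: "\<And>j j'. P j \<Longrightarrow> j \<le> j' \<Longrightarrow> j' < n \<Longrightarrow> P j'" and "j < n"
  shows "P j \<longleftrightarrow> n - j \<le> card {j'. j' < n \<and> P j'}"
proof
  assume "P j"
  then have "{j..<n} \<subseteq> {j'. j' < n \<and> P j'}" using up by auto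
  then have "card {j..<n} \<le> card {j'. j' < n \<and> P j'}" by (rule card_mono[rotated]) auto
  then show "n - j \<le> card {j'. j' < n \<and> P j'}" by simp
next
  assume card_ge: "n - j \<le> card {j'. j' < n \<and> P j'}"
  show "P j"
  proof (rule ccontr)
    assume "\<not> P j"
    have "{j'. j' < n \<and> P j'} \<subseteq> {Suc j..<n}"
    proof
      fix x
      assume "x \<in> {j'. j' < n \<and> P j'}"
      with up[of x j] \<open>\<not> P j\<close> \<open>j < n\<close> show "x \<in> {Suc j..<n}" by force
    qed
    then have "card {j'. j' < n \<and> P j'} \<le> card {Suc j..<n}" by (rule card_mono[rotated]) auto
    then show False using card_ge \<open>j < n\<close> by simp
  qed
qed

lemma conjugate_in_mono_seqs: "s \<in> mono_seqs m n \<Longrightarrow> conjugate m n s \<in> mono_seqs n m"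
  by (auto simp: mono_seqs_def conjugate_def intro!: mono_onI card_mono)

lemma conjugate_conjugate:
  assumes s: "s \<in> mono_seqs m n"
  shows "conjugate n m (conjugate m n s) = s"
proof
  fix j
  have mono: "s i \<le> s j" if "i \<le> j" "j \<le> n" for i j
    using s that by (auto simp: mono_seqs_def intro: mono_onD)
  have sn: "s n = m" and zero: "\<And>j. n < j \<Longrightarrow> s j = 0"
    using s by (auto simp: mono_seqs_def)
  show "conjugate n m (conjugate m n s) j = s j"
  proof (cases "j < n")
    case True
    have "s j \<le> m" using mono[of j n] True sn by simp
    have "m - k \<le> s j \<longleftrightarrow> n - j \<le> card {j'. j' < n \<and> m - k \<le> s j'}" for k
      using card_upward_closed_iff[of "\<lambda>j'. m - k \<le> s j'" n j] True mono
      by (meson le_trans less_imp_le_nat)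
    then have "n - j \<le> conjugate m n s k \<longleftrightarrow> m - k \<le> s j" if "k < m" for k
      using that by (simp add: conjugate_def)
    then have "{k. k < m \<and> n - j \<le> conjugate m n s k} = {m - s j..<m}"
      using \<open>s j \<le> m\<close> by auto
    then show ?thesis using True \<open>s j \<le> m\<close> by (simp add: conjugate_def)
  next
    case False
    then show ?thesis using sn zero by (cases "j = n") (auto simp: conjugate_def)
  qed
qed

lemma conjugate_mono: "s \<le> s' \<Longrightarrow> conjugate m n s \<le> conjugate m n s'"
  unfolding conjugate_def le_fun_def by (auto intro!: card_mono intro: order_trans)

lemma conjugate_le_iff:
  assumes "s \<in> mono_seqs m n" "s' \<in> mono_seqs m n"
  shows "conjugate m n s \<le> conjugate m n s' \<longleftrightarrow> s \<le> s'"
  using conjugate_mono[of "conjugate m n s" "conjugate m n s'" n m] conjugate_mono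
  by (auto simp: conjugate_conjugate assms)

lemma bij_betw_conjugate: "bij_betw (conjugate m n) (mono_seqs m n) (mono_seqs n m)"
  by (rule bij_betw_byWitness[where f' = "conjugate n m"])
     (auto simp: conjugate_conjugate conjugate_in_mono_seqs)

theorem mainTheorem3:
  fixes m n :: nat
  assumes "0 < m" and "0 < n"
  shows "\<exists>f. bij_betw f (monoms m n) (monoms n m) \<and>
           (\<forall>A\<in>monoms m n. \<forall>B\<in>monoms m n. geB m n A B \<longleftrightarrow> geB n m (f A) (f B))"
proof -
  define f where "f = diffs m \<circ> conjugate m n \<circ> psums n"
  have bij: "bij_betw f (monoms m n) (monoms n m)"
    unfolding f_def
    by (rule bij_betw_trans[OF bij_betw_psums bij_betw_trans[OF bij_betw_conjugate bij_betw_diffs]])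
  have psums_f: "psums m (f A) = conjugate m n (psums n A)" if "A \<in> monoms m n" for A
    using psums_diffs[OF conjugate_in_mono_seqs[OF psums_in_mono_seqs[OF that]]]
    by (simp add: f_def)
  have "geB m n A B \<longleftrightarrow> geB n m (f A) (f B)" if A: "A \<in> monoms m n" and B: "B \<in> monoms m n" for A B
  proof -
    have "geB m n A B \<longleftrightarrow> psums n B \<le> psums n A"
      using A B by (rule geB_iff_psums_le)
    also have "\<dots> \<longleftrightarrow> conjugate m n (psums n B) \<le> conjugate m n (psums n A)"
      using A B by (simp add: conjugate_le_iff psums_in_mono_seqs)
    also have "\<dots> \<longleftrightarrow> geB n m (f A) (f B)"
      using A B bij_betwE[OF bij] by (simp add: geB_iff_psums_le psums_f)
    finally show ?thesis .
  qed
  with bij show ?thesis by blast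
qed

end
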